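(* Let $S\in\mathbb{R}^d$ have density $f(\cdot\mid\beta^* )$, and for $k=1,\dots,K$ let $\Omega_k\in\mathbb{R}^{p_k}$ have density $g_k$, with $S,\Omega_1,\dots,\Omega_K$ mutually independent. For each $k$ let the optimization variables $O_k$ be defined by the inversion map $\Omega_k=D_kS+P_kO_k+q_k$ with fixed $D_k$, invertible $P_k$, and $q_k$. Let $\mathcal{R}=\mathcal{R}_S\times\prod_{k=1}^K\mathcal{R}_{O_k}$ be convex and compact. Then \[ \log\mathbb{P}\big((S,O_1,\dots,O_K)\in\mathcal{R}\mid\beta^*\big)\le-\inf_{s\in\mathcal{R}_S,\;o_k\in\mathcal{R}_{O_k},\,k=1,\dots,K}\Big\{\Lambda_f^*(s\mid\beta^* )+\sum_{k=1}^K\Lambda_{g_k}^*(D_ks+P_ko_k+q_k)\Big\}. \]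
   Context: $\Lambda_f^*(\cdot\mid\beta^* )$ is the convex conjugate of the log-MGF $\Lambda_f(t\mid\beta^* )=\log\mathbb{E}[\exp(t^TS)\mid\beta^*]$ and $\Lambda_{g_k}^*$ the convex conjugate of the log-MGF $\Lambda_{g_k}(t)=\log\mathbb{E}[\exp(t^T\Omega_k)]$; the convex conjugate of $\Lambda$ is $\Lambda^*(x)=\sup_t\{t^Tx-\Lambda(t)\}$. *)

theory Defs
  imports "HOL-Probability.Probability"
begin

text \<open>Vectors in R^n are represented as functions nat => real that vanish outside {..<n}
  (i.e. elements of PiE {..<n} (%_. UNIV)); matrices as nat => nat => real.\<close>

definition Rn :: "nat \<Rightarrow> (nat \<Rightarrow> real) set" where
  "Rn n = PiE {..<n} (\<lambda>_. UNIV)"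

definition lebn :: "nat \<Rightarrow> (nat \<Rightarrow> real) measure" where
  "lebn n = PiM {..<n} (\<lambda>_. lborel)"

definition dotn :: "nat \<Rightarrow> (nat \<Rightarrow> real) \<Rightarrow> (nat \<Rightarrow> real) \<Rightarrow> real" where
  "dotn n t x = (\<Sum>i<n. t i * x i)"

definition mv :: "nat \<Rightarrow> nat \<Rightarrow> (nat \<Rightarrow> nat \<Rightarrow> real) \<Rightarrow> (nat \<Rightarrow> real) \<Rightarrow> (nat \<Rightarrow> real)" where
  "mv m n A x = (\<lambda>i. if i < m then (\<Sum>j<n. A i j * x j) else 0)"

definition vadd :: "(nat \<Rightarrow> real) \<Rightarrow> (nat \<Rightarrow> real) \<Rightarrow> (nat \<Rightarrow> real)" where
  "vadd x y = (\<lambda>i. x i + y i)"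

definition invertible_sq :: "nat \<Rightarrow> (nat \<Rightarrow> nat \<Rightarrow> real) \<Rightarrow> bool" where
  "invertible_sq n P \<longleftrightarrow> (\<exists>Q. \<forall>i<n. \<forall>j<n.
      (\<Sum>l<n. P i l * Q l j) = (if i = j then 1 else 0) \<and>
      (\<Sum>l<n. Q i l * P l j) = (if i = j then 1 else 0))"

definition convex_set :: "(nat \<Rightarrow> real) set \<Rightarrow> bool" where
  "convex_set A \<longleftrightarrow> (\<forall>x\<in>A. \<forall>y\<in>A. \<forall>u::real. 0 \<le> u \<and> u \<le> 1 \<longrightarrow>
      (\<lambda>i. u * x i + (1 - u) * y i) \<in> A)"

definition eln :: "ennreal \<Rightarrow> ereal" where
  "eln a = (if a = 0 then -\<infinity> else if a = \<infinity> then \<infinity> else ereal (ln (enn2real a)))"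

definition log_mgf :: "nat \<Rightarrow> ((nat \<Rightarrow> real) \<Rightarrow> ennreal) \<Rightarrow> (nat \<Rightarrow> real) \<Rightarrow> ereal" where
  "log_mgf n h t = eln (\<integral>\<^sup>+ x. ennreal (exp (dotn n t x)) * h x \<partial>lebn n)"

definition convex_conj :: "nat \<Rightarrow> ((nat \<Rightarrow> real) \<Rightarrow> ereal) \<Rightarrow> (nat \<Rightarrow> real) \<Rightarrow> ereal" where
  "convex_conj n L x = (SUP t\<in>Rn n. ereal (dotn n t x) - L t)"

end

theory Submission
  imports Defs
begin

text \<open>Let \<open>A\<close> be the event in question, of probability \<open>\<pi> > 0\<close>. By convexity and
  compactness of the region, the conditional means \<open>s\<close>, \<open>o\<^sub>k\<close> of \<open>S\<close>, \<open>O\<^sub>k\<close> given \<open>A\<close> lie in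
  the region, and by linearity of the inversion map the conditional mean of \<open>\<Omega>\<^sub>k\<close> is
  \<open>D\<^sub>k s + P\<^sub>k o\<^sub>k + q\<^sub>k\<close>. For any dual vectors \<open>t\<^sub>0, \<dots>, t\<^sub>K\<close>, independence turns the product of the
  moment generating functions into \<open>E[exp Y]\<close> with \<open>Y = t\<^sub>0\<^sup>TS + \<Sum>\<^sub>k t\<^sub>k\<^sup>T\<Omega>\<^sub>k\<close>, and Jensen's
  inequality on \<open>A\<close> gives \<open>E[exp Y] \<ge> \<pi> exp (E[Y | A])\<close>. Taking logarithms,
  \<open>\<Sum>\<^sub>i (t\<^sub>i\<^sup>T m\<^sub>i - \<Lambda>\<^sub>i(t\<^sub>i)) \<le> - log \<pi>\<close> at the conditional means \<open>m\<^sub>i\<close>, and optimising over each \<open>t\<^sub>i\<close>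
  separately bounds the objective at \<open>(s, o)\<close>, hence its infimum, by \<open>- log \<pi>\<close>.\<close>

lemma continuous_on_coordinate [continuous_intros]: "continuous_on S (\<lambda>x::nat \<Rightarrow> real. x j)"
  by (rule continuous_on_product_then_coordinatewise[OF continuous_on_id])

lemma measurable_lebn_coordinate:
  assumes "X \<in> measurable M (lebn n)" "j < n"
  shows "(\<lambda>\<omega>. X \<omega> j) \<in> borel_measurable M"
proof -
  have "(\<lambda>x. x j) \<in> measurable (lebn n) lborel"
    unfolding lebn_def using assms(2) by (intro measurable_component_singleton) auto
  then show ?thesis
    using measurable_comp[OF assms(1)] by (simp add: comp_def)
qed

lemma borel_measurable_dotn: "dotn n t \<in> borel_measurable (lebn n)"
proof -
  have "(\<lambda>y. t j * y j) \<in> borel_measurable (lebn n)" if "j < n" for j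
    using measurable_lebn_coordinate[OF measurable_ident_sets[OF refl] that] by simp
  then show ?thesis
    unfolding dotn_def[abs_def] by (intro borel_measurable_sum) auto
qed

lemma convex_conj_cong:
  "(\<And>j. j < n \<Longrightarrow> x j = y j) \<Longrightarrow> convex_conj n L x = convex_conj n L y"
  by (simp add: convex_conj_def dotn_def)

lemma left_inverse_mv:
  fixes P Q :: "nat \<Rightarrow> nat \<Rightarrow> real"
  assumes "\<forall>i<n. \<forall>j<n. (\<Sum>l<n. Q i l * P l j) = (if i = j then 1 else 0)" "j < n"
  shows "(\<Sum>l<n. Q j l * (\<Sum>k<n. P l k * y k)) = y j"
proof -
  have "(\<Sum>l<n. Q j l * (\<Sum>k<n. P l k * y k)) = (\<Sum>l<n. \<Sum>k<n. Q j l * P l k * y k)"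
    by (simp add: sum_distrib_left mult.assoc)
  also have "\<dots> = (\<Sum>k<n. (\<Sum>l<n. Q j l * P l k) * y k)"
    by (subst sum.swap) (simp add: sum_distrib_right)
  also have "\<dots> = (\<Sum>k<n. if k = j then y k else 0)"
    using assms by (intro sum.cong) auto
  also have "\<dots> = y j"
    using assms(2) by simp
  finally show ?thesis .
qed

section \<open>Conditional means\<close>

text \<open>Coordinates from \<open>n\<close> on are \<open>undefined\<close>, as for the elements of \<open>Rn n\<close>.\<close>

definition cond_mean :: "'a measure \<Rightarrow> 'a set \<Rightarrow> nat \<Rightarrow> ('a \<Rightarrow> nat \<Rightarrow> real) \<Rightarrow> nat \<Rightarrow> real" where
  "cond_mean M A n X =
     (\<lambda>j. if j < n then (\<integral>\<omega>. indicator A \<omega> * X \<omega> j \<partial>M) / measure M A else undefined)"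

lemma cond_mean_in_Rn: "cond_mean M A n X \<in> Rn n"
  by (simp add: cond_mean_def Rn_def PiE_def extensional_def)

lemma integral_indicator_dotn:
  assumes "\<And>j. j < n \<Longrightarrow> integrable M (\<lambda>\<omega>. indicator A \<omega> * X \<omega> j)" "measure M A \<noteq> 0"
  shows "integrable M (\<lambda>\<omega>. indicator A \<omega> * dotn n t (X \<omega>))"
    and "(\<integral>\<omega>. indicator A \<omega> * dotn n t (X \<omega>) \<partial>M) = measure M A * dotn n t (cond_mean M A n X)"
proof -
  have eq: "(\<lambda>\<omega>. indicator A \<omega> * dotn n t (X \<omega>)) = (\<lambda>\<omega>. \<Sum>j<n. t j * (indicator A \<omega> * X \<omega> j))"
    by (simp add: dotn_def sum_distrib_left mult.left_commute)
  show "integrable M (\<lambda>\<omega>. indicator A \<omega> * dotn n t (X \<omega>))"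
    unfolding eq using assms(1) by auto
  have "(\<integral>\<omega>. indicator A \<omega> * dotn n t (X \<omega>) \<partial>M) = (\<Sum>j<n. t j * (\<integral>\<omega>. indicator A \<omega> * X \<omega> j \<partial>M))"
    unfolding eq using assms(1) by simp
  also have "\<dots> = measure M A * dotn n t (cond_mean M A n X)"
    using assms(2) by (simp add: dotn_def cond_mean_def sum_distrib_left)
  finally show "(\<integral>\<omega>. indicator A \<omega> * dotn n t (X \<omega>) \<partial>M) = measure M A * dotn n t (cond_mean M A n X)" .
qed

lemma integrable_indicator_coordinate_compact:
  fixes X :: "'a \<Rightarrow> nat \<Rightarrow> real"
  assumes "finite_measure M" "A \<in> sets M" "(\<lambda>\<omega>. X \<omega> j) \<in> borel_measurable M"
    and "compact C" "\<And>\<omega>. \<omega> \<in> A \<Longrightarrow> X \<omega> \<in> C"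
  shows "integrable M (\<lambda>\<omega>. indicator A \<omega> * X \<omega> j)"
proof -
  have "bounded ((\<lambda>x. x j) ` C)"
    by (intro compact_imp_bounded compact_continuous_image continuous_on_coordinate assms(4))
  then obtain B where B: "\<And>x. x \<in> C \<Longrightarrow> \<bar>x j\<bar> \<le> B"
    by (auto simp: bounded_real)
  show ?thesis
  proof (rule finite_measure.integrable_const_bound[OF assms(1), where B = "\<bar>B\<bar>"])
    show "AE \<omega> in M. norm (indicator A \<omega> * X \<omega> j) \<le> \<bar>B\<bar>"
      using B assms(5) by (intro AE_I2) (force simp: indicator_def)
    show "(\<lambda>\<omega>. indicator A \<omega> * X \<omega> j) \<in> borel_measurable M"
      using assms(2,3) by measurable
  qed
qed

lemma linear_coeff_nonpos_of_quadratic_nonneg: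
  fixes a b :: real
  assumes "\<And>u. 0 < u \<Longrightarrow> u \<le> 1 \<Longrightarrow> 0 \<le> u\<^sup>2 * b - 2 * u * a" and "0 \<le> b"
  shows "a \<le> 0"
proof (rule ccontr)
  assume "\<not> a \<le> 0"
  then have a: "a > 0" by simp
  define u where "u = (if b = 0 then 1 else min 1 (a / b))"
  have u: "0 < u" "u \<le> 1" "u * b \<le> a"
    using a assms(2) by (auto simp: u_def min_def field_simps)
  have "u\<^sup>2 * b - 2 * u * a = u * (u * b - 2 * a)"
    by (simp add: power2_eq_square algebra_simps)
  also have "\<dots> < 0"
    using u a by (intro mult_pos_neg) auto
  finally show False
    using assms(1)[OF u(1,2)] by simp
qed

lemma nearest_point_obtuse:
  assumes "convex_set C" "c \<in> C" "y \<in> C"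
    and nearest: "\<And>y. y \<in> C \<Longrightarrow> (\<Sum>j<n. (x j - c j)\<^sup>2) \<le> (\<Sum>j<n. (x j - y j)\<^sup>2)"
  shows "dotn n (\<lambda>j. x j - c j) y \<le> dotn n (\<lambda>j. x j - c j) c"
proof -
  define w where "w = (\<lambda>j. x j - c j)"
  have "dotn n w y - dotn n w c \<le> 0"
  proof (rule linear_coeff_nonpos_of_quadratic_nonneg)
    show "0 \<le> (\<Sum>j<n. (y j - c j)\<^sup>2)"
      by (intro sum_nonneg) auto
    fix u :: real assume u: "0 < u" "u \<le> 1"
    have "(\<lambda>j. u * y j + (1 - u) * c j) \<in> C"
      using assms(1-3) u unfolding convex_set_def by auto
    from nearest[OF this]
    have "(\<Sum>j<n. (w j)\<^sup>2) \<le> (\<Sum>j<n. (w j - u * (y j - c j))\<^sup>2)"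
      unfolding w_def by (simp add: algebra_simps)
    also have "\<dots> = (\<Sum>j<n. (w j)\<^sup>2 + (u\<^sup>2 * (y j - c j)\<^sup>2 - 2 * u * (w j * y j - w j * c j)))"
      by (intro sum.cong) (simp_all add: power2_eq_square algebra_simps)
    also have "\<dots> = (\<Sum>j<n. (w j)\<^sup>2) + (u\<^sup>2 * (\<Sum>j<n. (y j - c j)\<^sup>2) - 2 * u * (dotn n w y - dotn n w c))"
      by (simp add: dotn_def sum.distrib sum_subtractf flip: sum_distrib_left)
    finally show "0 \<le> u\<^sup>2 * (\<Sum>j<n. (y j - c j)\<^sup>2) - 2 * u * (dotn n w y - dotn n w c)"
      by simp
  qed
  then show ?thesis
    unfolding w_def by simp
qed

text \<open>The mean \<open>m\<close> coincides with its nearest point \<open>c\<close> in \<open>C\<close>: averaging the obtuse-angle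
  inequality at \<open>c\<close> over \<open>A\<close> yields \<open>|m - c|\<^sup>2 \<le> 0\<close>.\<close>

lemma cond_mean_in_convex:
  assumes "finite_measure M" "A \<in> sets M" "measure M A > 0"
    and C: "C \<subseteq> Rn n" "convex_set C" "compact C"
    and XC: "\<And>\<omega>. \<omega> \<in> A \<Longrightarrow> X \<omega> \<in> C"
    and iX: "\<And>j. j < n \<Longrightarrow> integrable M (\<lambda>\<omega>. indicator A \<omega> * X \<omega> j)"
  shows "cond_mean M A n X \<in> C"
proof -
  define m where "m = cond_mean M A n X"
  have "A \<noteq> {}"
    using assms(3) by auto
  then have "C \<noteq> {}"
    using XC by blast
  moreover have "continuous_on C (\<lambda>y. \<Sum>j<n. (m j - y j)\<^sup>2)"
    by (intro continuous_intros)
  ultimately obtain c where c: "c \<in> C" "\<And>y. y \<in> C \<Longrightarrow> (\<Sum>j<n. (m j - c j)\<^sup>2) \<le> (\<Sum>j<n. (m j - y j)\<^sup>2)"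
    using continuous_attains_inf[OF C(3)] by blast
  define w where "w = (\<lambda>j. m j - c j)"
  have "integrable M (\<lambda>\<omega>. indicator A \<omega> :: real)"
    using assms(1,2) by (simp add: integrable_real_indicator finite_measure.emeasure_eq_measure)
  then have "measure M A * dotn n w m = (\<integral>\<omega>. indicator A \<omega> * dotn n w (X \<omega>) \<partial>M)"
    using integral_indicator_dotn[OF iX] assms(3) by (simp add: m_def)
  also have "\<dots> \<le> (\<integral>\<omega>. indicator A \<omega> * dotn n w c \<partial>M)"
  proof (rule integral_mono)
    show "integrable M (\<lambda>\<omega>. indicator A \<omega> * dotn n w (X \<omega>))"
      using integral_indicator_dotn[OF iX] assms(3) by simp
    show "integrable M (\<lambda>\<omega>. indicator A \<omega> * dotn n w c)"
      using \<open>integrable M (\<lambda>\<omega>. indicator A \<omega> :: real)\<close> by simp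
    show "indicator A \<omega> * dotn n w (X \<omega>) \<le> indicator A \<omega> * dotn n w c" for \<omega>
      using nearest_point_obtuse[OF C(2) c(1) XC c(2)] by (cases "\<omega> \<in> A") (auto simp: w_def)
  qed
  also have "\<dots> = measure M A * dotn n w c"
    using assms(2) by simp
  finally have "dotn n w m \<le> dotn n w c"
    using assms(3) by simp
  moreover have "dotn n w m - dotn n w c = (\<Sum>j<n. (w j)\<^sup>2)"
    by (simp add: dotn_def w_def power2_eq_square sum_subtractf[symmetric] algebra_simps)
  ultimately have "(\<Sum>j<n. (w j)\<^sup>2) \<le> 0"
    by simp
  then have "\<forall>j\<in>{..<n}. w j = 0"
    using sum_nonneg_eq_0_iff[of "{..<n}" "\<lambda>j. (w j)\<^sup>2"] by (simp add: sum_nonneg antisym)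
  moreover have "c \<in> Rn n" "m \<in> Rn n"
    using c(1) C(1) by (auto simp: m_def cond_mean_in_Rn)
  ultimately have "m = c"
    unfolding w_def Rn_def by (intro PiE_ext) auto
  then show ?thesis
    using c(1) by (simp add: m_def)
qed

lemma borel_measurable_inversion_coordinate:
  assumes "invertible_sq m P" "S \<in> measurable M (lebn d)" "W \<in> measurable M (lebn m)"
    and W: "\<And>\<omega>. \<omega> \<in> space M \<Longrightarrow> W \<omega> = vadd (vadd (mv m d D (S \<omega>)) (mv m m P (Ov \<omega>))) q"
    and "j < m"
  shows "(\<lambda>\<omega>. Ov \<omega> j) \<in> borel_measurable M"
proof -
  obtain Q where Q: "\<forall>i<m. \<forall>j<m. (\<Sum>l<m. Q i l * P l j) = (if i = j then 1 else 0)"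
    using assms(1) unfolding invertible_sq_def by blast
  have "Ov \<omega> j = (\<Sum>l<m. Q j l * (W \<omega> l - (\<Sum>k<d. D l k * S \<omega> k) - q l))" if "\<omega> \<in> space M" for \<omega>
  proof -
    have "(\<Sum>l<m. Q j l * (W \<omega> l - (\<Sum>k<d. D l k * S \<omega> k) - q l))
        = (\<Sum>l<m. Q j l * (\<Sum>k<m. P l k * Ov \<omega> k))"
      using W[OF that] by (intro sum.cong) (auto simp: vadd_def mv_def)
    then show ?thesis
      using left_inverse_mv[OF Q assms(5)] by simp
  qed
  moreover have "(\<lambda>\<omega>. \<Sum>l<m. Q j l * (W \<omega> l - (\<Sum>k<d. D l k * S \<omega> k) - q l)) \<in> borel_measurable M"
    using measurable_lebn_coordinate[OF assms(2)] measurable_lebn_coordinate[OF assms(3)] by auto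
  ultimately show ?thesis
    by (simp cong: measurable_cong)
qed

lemma cond_mean_inversion_map:
  assumes "finite_measure M" "A \<in> sets M" "measure M A \<noteq> 0"
    and W: "\<And>\<omega>. \<omega> \<in> space M \<Longrightarrow> W \<omega> = vadd (vadd (mv m d D (S \<omega>)) (mv m m P (Ov \<omega>))) q"
    and iS: "\<And>j. j < d \<Longrightarrow> integrable M (\<lambda>\<omega>. indicator A \<omega> * S \<omega> j)"
    and iO: "\<And>j. j < m \<Longrightarrow> integrable M (\<lambda>\<omega>. indicator A \<omega> * Ov \<omega> j)"
    and "j < m"
  shows "integrable M (\<lambda>\<omega>. indicator A \<omega> * W \<omega> j)"
    and "cond_mean M A m W j
           = vadd (vadd (mv m d D (cond_mean M A d S)) (mv m m P (cond_mean M A m Ov))) q j"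
proof -
  define V where "V \<omega> = indicator A \<omega> * dotn d (D j) (S \<omega>) + indicator A \<omega> * dotn m (P j) (Ov \<omega>)
      + q j * indicator A \<omega>" for \<omega>
  have W_j: "indicator A \<omega> * W \<omega> j = V \<omega>" if "\<omega> \<in> space M" for \<omega>
    using W[OF that] assms(7) by (simp add: V_def vadd_def mv_def dotn_def algebra_simps)
  have iA: "integrable M (\<lambda>\<omega>. indicator A \<omega> :: real)"
    using assms(1,2) by (simp add: finite_measure.emeasure_eq_measure)
  have iV: "integrable M V"
    unfolding V_def
    using integral_indicator_dotn(1)[OF iS assms(3)] integral_indicator_dotn(1)[OF iO assms(3)] iA
    by auto
  then show "integrable M (\<lambda>\<omega>. indicator A \<omega> * W \<omega> j)"
    using W_j by (simp cong: Bochner_Integration.integrable_cong)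
  have "(\<integral>\<omega>. indicator A \<omega> * W \<omega> j \<partial>M) = (\<integral>\<omega>. V \<omega> \<partial>M)"
    using W_j by (intro Bochner_Integration.integral_cong) auto
  also have "\<dots> = measure M A * dotn d (D j) (cond_mean M A d S)
      + measure M A * dotn m (P j) (cond_mean M A m Ov) + q j * measure M A"
    unfolding V_def
    using integral_indicator_dotn[OF iS assms(3)] integral_indicator_dotn[OF iO assms(3)] iA assms(2)
    by simp
  finally show "cond_mean M A m W j
      = vadd (vadd (mv m d D (cond_mean M A d S)) (mv m m P (cond_mean M A m Ov))) q j"
    using assms(3,7) by (simp add: cond_mean_def vadd_def mv_def dotn_def field_simps)
qed

section \<open>The Chernoff bound\<close>

lemma jensen_exp_on_event:
  assumes "prob_space M" "A \<in> sets M" "measure M A > 0"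
    and iY: "integrable M (\<lambda>\<omega>. indicator A \<omega> * Y \<omega>)"
  shows "ennreal (measure M A * exp ((\<integral>\<omega>. indicator A \<omega> * Y \<omega> \<partial>M) / measure M A))
           \<le> (\<integral>\<^sup>+\<omega>. ennreal (exp (Y \<omega>)) \<partial>M)"
proof -
  interpret prob_space M by fact
  define \<pi> where "\<pi> = measure M A"
  define c where "c = (\<integral>\<omega>. indicator A \<omega> * Y \<omega> \<partial>M) / \<pi>"
  \<comment> \<open>the tangent line of \<open>exp\<close> at \<open>c\<close>, cut off outside \<open>A\<close>\<close>
  define h where "h \<omega> = exp c * indicator A \<omega> + exp c * (indicator A \<omega> * Y \<omega>) - exp c * c * indicator A \<omega>" for \<omega>
  have iA: "integrable M (\<lambda>\<omega>. indicator A \<omega> :: real)"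
    using assms(2) by (simp add: integrable_real_indicator emeasure_eq_measure)
  then have ih: "integrable M h"
    unfolding h_def using iY by auto
  have "(\<integral>\<omega>. h \<omega> \<partial>M) = exp c * \<pi> + exp c * (\<integral>\<omega>. indicator A \<omega> * Y \<omega> \<partial>M) - exp c * c * \<pi>"
    unfolding h_def using iA iY assms(2) by (simp add: \<pi>_def)
  also have "\<dots> = \<pi> * exp c"
    using assms(3) by (simp add: c_def \<pi>_def field_simps)
  finally have "\<pi> * exp c = (\<integral>\<omega>. h \<omega> \<partial>M)" ..
  then have "ennreal (\<pi> * exp c) \<le> ennreal (\<integral>\<omega>. max 0 (h \<omega>) \<partial>M)"
    using ih by (intro ennreal_leI) (auto intro!: integral_mono)
  also have "\<dots> = (\<integral>\<^sup>+\<omega>. max 0 (h \<omega>) \<partial>M)"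
    using ih by (intro nn_integral_eq_integral[symmetric]) auto
  also have "\<dots> \<le> (\<integral>\<^sup>+\<omega>. ennreal (exp (Y \<omega>)) \<partial>M)"
  proof (intro nn_integral_mono ennreal_leI)
    fix \<omega>
    have "exp c * (1 + (Y \<omega> - c)) \<le> exp (Y \<omega>)"
      using exp_ge_add_one_self[of "Y \<omega> - c"] by (simp add: exp_diff field_simps)
    then show "max 0 (h \<omega>) \<le> exp (Y \<omega>)"
      by (cases "\<omega> \<in> A") (auto simp: h_def algebra_simps)
  qed
  finally show ?thesis
    by (simp add: \<pi>_def c_def)
qed

lemma SUP_diff_eln_nonneg:
  assumes "z \<in> T" "a z = 0" "\<phi> z = 1"
  shows "0 \<le> (SUP x\<in>T. ereal (a x) - eln (\<phi> x))"
proof -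
  have "ereal (a z) - eln (\<phi> z) \<le> (SUP x\<in>T. ereal (a x) - eln (\<phi> x))"
    using assms(1) by (rule SUP_upper)
  then show ?thesis
    using assms(2,3) by (simp add: eln_def)
qed

lemma prod_bound_fix_coordinate:
  fixes a :: "'i \<Rightarrow> 'v \<Rightarrow> real" and \<phi> :: "'i \<Rightarrow> 'v \<Rightarrow> ennreal"
  assumes bound: "\<And>t. (\<forall>i\<in>insert k I. t i \<in> T i) \<Longrightarrow>
      ennreal (c * exp (\<Sum>i\<in>insert k I. a i (t i))) \<le> (\<Prod>i\<in>insert k I. \<phi> i (t i))"
    and "finite I" "k \<notin> I" "c > 0" "x \<in> T k" "\<phi> k x = ennreal r" "r > 0"
    and t: "\<forall>i\<in>I. t i \<in> T i"
  shows "ennreal (c * exp (a k x) / r * exp (\<Sum>i\<in>I. a i (t i))) \<le> (\<Prod>i\<in>I. \<phi> i (t i))"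
proof -
  define c' where "c' = c * exp (a k x) / r"
  have "ennreal (c * exp (\<Sum>i\<in>insert k I. a i ((t(k:=x)) i))) \<le> (\<Prod>i\<in>insert k I. \<phi> i ((t(k:=x)) i))"
    using t assms(5) by (intro bound) auto
  also have "(\<Sum>i\<in>insert k I. a i ((t(k:=x)) i)) = a k x + (\<Sum>i\<in>I. a i (t i))"
    using assms(2,3) by (auto intro!: sum.cong)
  also have "(\<Prod>i\<in>insert k I. \<phi> i ((t(k:=x)) i)) = ennreal r * (\<Prod>i\<in>I. \<phi> i (t i))"
    using assms(2,3,6) by (auto intro!: prod.cong arg_cong2[where f="(*)"])
  also have "c * exp (a k x + (\<Sum>i\<in>I. a i (t i))) = r * (c' * exp (\<Sum>i\<in>I. a i (t i)))"
    using assms(7) by (simp add: c'_def exp_add)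
  finally have "ennreal (r * (c' * exp (\<Sum>i\<in>I. a i (t i)))) \<le> ennreal r * (\<Prod>i\<in>I. \<phi> i (t i))" .
  moreover have "0 \<le> c' * exp (\<Sum>i\<in>I. a i (t i))"
    using assms(4,7) by (simp add: c'_def)
  ultimately show ?thesis
    using assms(7) by (simp add: ennreal_mult ennreal_mult_le_mult_iff flip: c'_def)
qed

lemma prod_bound_nonzero:
  fixes a :: "'i \<Rightarrow> 'v \<Rightarrow> real" and \<phi> :: "'i \<Rightarrow> 'v \<Rightarrow> ennreal"
  assumes bound: "\<And>t. (\<forall>i\<in>I. t i \<in> T i) \<Longrightarrow>
      ennreal (c * exp (\<Sum>i\<in>I. a i (t i))) \<le> (\<Prod>i\<in>I. \<phi> i (t i))"
    and "c > 0" "finite I" "\<forall>i\<in>I. z i \<in> T i" "k \<in> I" "x \<in> T k"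
  shows "\<phi> k x \<noteq> 0"
proof
  assume "\<phi> k x = 0"
  have "ennreal (c * exp (\<Sum>i\<in>I. a i ((z(k:=x)) i))) \<le> (\<Prod>i\<in>I. \<phi> i ((z(k:=x)) i))"
    using assms(4,6) by (intro bound) auto
  also have "\<dots> = 0"
    using assms(3,5) \<open>\<phi> k x = 0\<close> by (auto simp: prod_zero_iff)
  finally show False
    using assms(2) by simp
qed

text \<open>The points \<open>z i\<close> make every supremum nonnegative, which rules out \<open>\<infinity> - \<infinity>\<close> in the sum
  and lets the joint bound be peeled off one coordinate at a time.\<close>

lemma sum_SUP_diff_eln_le:
  fixes a :: "'i \<Rightarrow> 'v \<Rightarrow> real" and \<phi> :: "'i \<Rightarrow> 'v \<Rightarrow> ennreal"
  assumes "finite I"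
    and zero: "\<And>i. i \<in> I \<Longrightarrow> z i \<in> T i \<and> a i (z i) = 0 \<and> \<phi> i (z i) = 1"
    and "c > 0"
    and bound: "\<And>t. (\<forall>i\<in>I. t i \<in> T i) \<Longrightarrow>
      ennreal (c * exp (\<Sum>i\<in>I. a i (t i))) \<le> (\<Prod>i\<in>I. \<phi> i (t i))"
  shows "(\<Sum>i\<in>I. SUP x\<in>T i. ereal (a i x) - eln (\<phi> i x)) \<le> ereal (- ln c)"
  using assms
proof (induction I arbitrary: c rule: finite_induct)
  case empty
  from empty.prems(3)[of z] have "c \<le> 1"
    using empty.prems(2) by (simp add: ennreal_le_1)
  then show ?case
    using empty.prems(2) by (simp add: zero_ereal_def)
next
  case (insert k I c)
  define SI where "SI = (\<Sum>i\<in>I. SUP x\<in>T i. ereal (a i x) - eln (\<phi> i x))"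
  have z: "z k \<in> T k" "a k (z k) = 0" "\<phi> k (z k) = 1"
    using insert.prems(1) by auto
  have SI_rest: "SI \<le> ereal (- ln c - a k x + ln r)"
    if x: "x \<in> T k" "\<phi> k x = ennreal r" "r > 0" for x r
  proof -
    have "SI \<le> ereal (- ln (c * exp (a k x) / r))"
      unfolding SI_def
    proof (rule insert.IH)
      show "\<And>i. i \<in> I \<Longrightarrow> z i \<in> T i \<and> a i (z i) = 0 \<and> \<phi> i (z i) = 1"
        using insert.prems(1) by blast
      show "0 < c * exp (a k x) / r"
        using insert.prems(2) x(3) by simp
      show "ennreal (c * exp (a k x) / r * exp (\<Sum>i\<in>I. a i (t i))) \<le> (\<Prod>i\<in>I. \<phi> i (t i))"
        if "\<forall>i\<in>I. t i \<in> T i" for t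
        using insert.prems(3) insert.hyps insert.prems(2) x that
        by (rule prod_bound_fix_coordinate[where k = k and I = I and T = T and a = a and \<phi> = \<phi>])
    qed
    also have "- ln (c * exp (a k x) / r) = - ln c - a k x + ln r"
      using insert.prems(2) x(3) by (simp add: ln_div ln_mult)
    finally show ?thesis .
  qed
  have "0 \<le> SI"
    unfolding SI_def using insert.prems(1) by (intro sum_nonneg SUP_diff_eln_nonneg) auto
  moreover have "SI \<le> ereal (- ln c)"
    using SI_rest[OF z(1), of 1] z by simp
  ultimately obtain s where s: "SI = ereal s"
    by (cases SI) auto
  have "(SUP x\<in>T k. ereal (a k x) - eln (\<phi> k x)) \<le> ereal (- ln c - s)"
  proof (rule SUP_least)
    fix x assume x: "x \<in> T k"
    show "ereal (a k x) - eln (\<phi> k x) \<le> ereal (- ln c - s)"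
    proof (cases "\<phi> k x")
      case (real r)
      have "\<phi> k x \<noteq> 0"
        using insert.prems(1) insert.hyps(1) x
        by (intro prod_bound_nonzero[where I = "insert k I" and T = T and a = a and \<phi> = \<phi> and z = z,
              OF insert.prems(3,2)]) auto
      with real have "r > 0"
        by auto
      with SI_rest[of x r] x real s show ?thesis
        by (simp add: eln_def)
    qed (simp add: eln_def)
  qed
  then have "(SUP x\<in>T k. ereal (a k x) - eln (\<phi> k x)) + SI \<le> ereal (- ln c - s) + ereal s"
    unfolding s by (rule add_right_mono)
  then show ?case
    using insert.hyps by (simp add: SI_def)
qed

lemma sum_convex_conj_cond_mean_le:
  assumes "prob_space M" "finite I"
    and indep: "prob_space.indep_vars M (\<lambda>i. lebn (n i)) Z I"
    and dist: "\<And>i. i \<in> I \<Longrightarrow> distributed M (lebn (n i)) (Z i) (G i)"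
    and "A \<in> sets M" "measure M A > 0"
    and iZ: "\<And>i j. i \<in> I \<Longrightarrow> j < n i \<Longrightarrow> integrable M (\<lambda>\<omega>. indicator A \<omega> * Z i \<omega> j)"
  shows "(\<Sum>i\<in>I. convex_conj (n i) (log_mgf (n i) (G i)) (cond_mean M A (n i) (Z i)))
           \<le> ereal (- ln (measure M A))"
proof -
  interpret prob_space M by fact
  define \<pi> where "\<pi> = measure M A"
  define m where "m i = cond_mean M A (n i) (Z i)" for i
  define mgf where "mgf i t = (\<integral>\<^sup>+y. ennreal (exp (dotn (n i) t y)) * G i y \<partial>lebn (n i))" for i t
  have mgf_eq: "mgf i t = (\<integral>\<^sup>+\<omega>. ennreal (exp (dotn (n i) t (Z i \<omega>))) \<partial>M)" if "i \<in> I" for i t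
    using distributed_nn_integral[OF dist[OF that], of "\<lambda>y. ennreal (exp (dotn (n i) t y))"]
      borel_measurable_dotn[of "n i" t]
    by (simp add: mgf_def mult.commute)
  have "(\<Sum>i\<in>I. SUP t\<in>Rn (n i). ereal (dotn (n i) t (m i)) - eln (mgf i t)) \<le> ereal (- ln \<pi>)"
  proof (rule sum_SUP_diff_eln_le[where z = "\<lambda>i j. if j < n i then 0 else undefined"])
    show "finite I" "0 < \<pi>"
      using assms(2,6) by (simp_all add: \<pi>_def)
    fix i assume i: "i \<in> I"
    have "mgf i (\<lambda>j. if j < n i then 0 else undefined) = emeasure M (space M)"
      by (simp add: mgf_eq[OF i] dotn_def)
    then show "(\<lambda>j. if j < n i then 0 else undefined) \<in> Rn (n i)
        \<and> dotn (n i) (\<lambda>j. if j < n i then 0 else undefined) (m i) = 0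
        \<and> mgf i (\<lambda>j. if j < n i then 0 else undefined) = 1"
      by (simp add: Rn_def PiE_def extensional_def dotn_def emeasure_space_1)
  next
    fix t assume t: "\<forall>i\<in>I. t i \<in> Rn (n i)"
    define Y where "Y \<omega> = (\<Sum>i\<in>I. dotn (n i) (t i) (Z i \<omega>))" for \<omega>
    have "(\<Prod>i\<in>I. mgf i (t i)) = (\<Prod>i\<in>I. \<integral>\<^sup>+\<omega>. ennreal (exp (dotn (n i) (t i) (Z i \<omega>))) \<partial>M)"
      using mgf_eq by simp
    also have "\<dots> = (\<integral>\<^sup>+\<omega>. (\<Prod>i\<in>I. ennreal (exp (dotn (n i) (t i) (Z i \<omega>)))) \<partial>M)"
      using assms(2) borel_measurable_dotn
      by (intro indep_vars_nn_integral[symmetric] indep_vars_compose2[OF indep]) auto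
    also have "\<dots> = (\<integral>\<^sup>+\<omega>. ennreal (exp (Y \<omega>)) \<partial>M)"
      using assms(2) by (simp add: Y_def prod_ennreal exp_sum)
    finally have prod_mgf: "(\<Prod>i\<in>I. mgf i (t i)) = (\<integral>\<^sup>+\<omega>. ennreal (exp (Y \<omega>)) \<partial>M)" .
    have Y_sum: "(\<lambda>\<omega>. indicator A \<omega> * Y \<omega>) = (\<lambda>\<omega>. \<Sum>i\<in>I. indicator A \<omega> * dotn (n i) (t i) (Z i \<omega>))"
      by (simp add: Y_def sum_distrib_left)
    have "integrable M (\<lambda>\<omega>. indicator A \<omega> * Y \<omega>)"
      unfolding Y_sum using integral_indicator_dotn(1)[OF iZ] assms(6) by auto
    from jensen_exp_on_event[OF assms(1,5,6) this]
    have "ennreal (\<pi> * exp ((\<integral>\<omega>. indicator A \<omega> * Y \<omega> \<partial>M) / \<pi>)) \<le> (\<Prod>i\<in>I. mgf i (t i))"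
      by (simp add: prod_mgf \<pi>_def)
    moreover have "(\<integral>\<omega>. indicator A \<omega> * Y \<omega> \<partial>M) = \<pi> * (\<Sum>i\<in>I. dotn (n i) (t i) (m i))"
      unfolding Y_sum using integral_indicator_dotn[OF iZ] assms(6)
      by (simp add: \<pi>_def m_def sum_distrib_left)
    ultimately show "ennreal (\<pi> * exp (\<Sum>i\<in>I. dotn (n i) (t i) (m i))) \<le> (\<Prod>i\<in>I. mgf i (t i))"
      using assms(6) by (simp add: \<pi>_def)
  qed
  then show ?thesis
    by (simp add: convex_conj_def log_mgf_def mgf_def m_def \<pi>_def)
qed

lemma convex_conj_cond_means_le:
  fixes d K :: nat
  assumes "prob_space M"
    and "distributed M (lebn d) S f"
    and "\<And>k. k \<in> {1..K} \<Longrightarrow> distributed M (lebn (p k)) (\<Omega> k) (g k)"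
    and "prob_space.indep_vars M (\<lambda>i. lebn (if i = 0 then d else p i))
           (\<lambda>i. if i = 0 then S else \<Omega> i) {0..K}"
    and "A \<in> sets M" "measure M A > 0"
    and "\<And>j. j < d \<Longrightarrow> integrable M (\<lambda>\<omega>. indicator A \<omega> * S \<omega> j)"
    and "\<And>k j. k \<in> {1..K} \<Longrightarrow> j < p k \<Longrightarrow> integrable M (\<lambda>\<omega>. indicator A \<omega> * \<Omega> k \<omega> j)"
  shows "convex_conj d (log_mgf d f) (cond_mean M A d S)
           + (\<Sum>k=1..K. convex_conj (p k) (log_mgf (p k) (g k)) (cond_mean M A (p k) (\<Omega> k)))
         \<le> ereal (- ln (measure M A))"
proof -
  define n where "n i = (if i = 0 then d else p i)" for i
  define Z where "Z i = (if i = 0 then S else \<Omega> i)" for i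
  define G where "G i = (if i = 0 then f else g i)" for i
  have "(\<Sum>k=1..K. convex_conj (p k) (log_mgf (p k) (g k)) (cond_mean M A (p k) (\<Omega> k)))
      = (\<Sum>i=Suc 0..K. convex_conj (n i) (log_mgf (n i) (G i)) (cond_mean M A (n i) (Z i)))"
    by (intro sum.cong) (auto simp: n_def Z_def G_def)
  then have "convex_conj d (log_mgf d f) (cond_mean M A d S)
          + (\<Sum>k=1..K. convex_conj (p k) (log_mgf (p k) (g k)) (cond_mean M A (p k) (\<Omega> k)))
      = (\<Sum>i\<in>{0..K}. convex_conj (n i) (log_mgf (n i) (G i)) (cond_mean M A (n i) (Z i)))"
    by (simp add: sum.atLeast_Suc_atMost n_def Z_def G_def)
  also have "\<dots> \<le> ereal (- ln (measure M A))"
  proof (rule sum_convex_conj_cond_mean_le[OF assms(1) finite_atLeastAtMost _ _ assms(5,6)])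
    show "prob_space.indep_vars M (\<lambda>i. lebn (n i)) Z {0..K}"
      using assms(4) by (simp add: n_def[abs_def] Z_def[abs_def])
    show "distributed M (lebn (n i)) (Z i) (G i)" if "i \<in> {0..K}" for i
      using assms(2,3) that by (simp add: n_def Z_def G_def)
    show "integrable M (\<lambda>\<omega>. indicator A \<omega> * Z i \<omega> j)" if "i \<in> {0..K}" "j < n i" for i j
      using assms(7,8) that by (auto simp: n_def Z_def)
  qed
  finally show ?thesis .
qed

lemma eln_le_neg_INF:
  assumes "0 < r" "x \<in> R" "F x \<le> ereal (- ln r)"
  shows "eln (ennreal r) \<le> - (INF y\<in>R. F y)"
proof -
  have "(INF y\<in>R. F y) \<le> ereal (- ln r)"
    using assms(2,3) by (blast intro: INF_lower2)
  then show ?thesis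
    using assms(1) by (cases "INF y\<in>R. F y") (simp_all add: eln_def)
qed

theorem lemma1:
  fixes M :: "'a measure"
    and d K :: nat and p :: "nat \<Rightarrow> nat"
    and S :: "'a \<Rightarrow> nat \<Rightarrow> real"
    and \<Omega> Ov :: "nat \<Rightarrow> 'a \<Rightarrow> nat \<Rightarrow> real"
    and f :: "(nat \<Rightarrow> real) \<Rightarrow> ennreal"
    and g :: "nat \<Rightarrow> (nat \<Rightarrow> real) \<Rightarrow> ennreal"
    and D P :: "nat \<Rightarrow> nat \<Rightarrow> nat \<Rightarrow> real"
    and q :: "nat \<Rightarrow> nat \<Rightarrow> real"
    and RS :: "(nat \<Rightarrow> real) set" and RO :: "nat \<Rightarrow> (nat \<Rightarrow> real) set"
  assumes "prob_space M"
    and "distributed M (lebn d) S f"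
    and "\<And>k. k \<in> {1..K} \<Longrightarrow> distributed M (lebn (p k)) (\<Omega> k) (g k)"
    and "prob_space.indep_vars M (\<lambda>i. lebn (if i = 0 then d else p i))
           (\<lambda>i. if i = 0 then S else \<Omega> i) {0..K}"
    and "\<And>k. k \<in> {1..K} \<Longrightarrow> invertible_sq (p k) (P k)"
    and "\<And>k. k \<in> {1..K} \<Longrightarrow> q k \<in> Rn (p k)"
    and "\<And>k \<omega>. k \<in> {1..K} \<Longrightarrow> \<omega> \<in> space M \<Longrightarrow> Ov k \<omega> \<in> Rn (p k)"
    and "\<And>k \<omega>. k \<in> {1..K} \<Longrightarrow> \<omega> \<in> space M \<Longrightarrow>
           \<Omega> k \<omega> = vadd (vadd (mv (p k) d (D k) (S \<omega>)) (mv (p k) (p k) (P k) (Ov k \<omega>))) (q k)"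
    and "RS \<subseteq> Rn d" and "\<And>k. k \<in> {1..K} \<Longrightarrow> RO k \<subseteq> Rn (p k)"
    and "RS \<noteq> {} \<and> (\<forall>k\<in>{1..K}. RO k \<noteq> {}) \<longrightarrow>
           convex_set RS \<and> compact RS \<and> (\<forall>k\<in>{1..K}. convex_set (RO k) \<and> compact (RO k))"
  shows "eln (emeasure M {\<omega> \<in> space M. S \<omega> \<in> RS \<and> (\<forall>k\<in>{1..K}. Ov k \<omega> \<in> RO k)})
           \<le> - (INF so \<in> {(s, ov). s \<in> RS \<and> (\<forall>k\<in>{1..K}. ov k \<in> RO k)}.
                  convex_conj d (log_mgf d f) (fst so)
                  + (\<Sum>k=1..K. convex_conj (p k) (log_mgf (p k) (g k))
                       (vadd (vadd (mv (p k) d (D k) (fst so)) (mv (p k) (p k) (P k) (snd so k))) (q k))))"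
    (is "eln (emeasure M ?A) \<le> - (INF so \<in> ?R. ?F so)")
proof -
  \<comment> \<open>Only coordinates below the dimension enter.\<close>
  interpret prob_space M by fact
  define A where "A = ?A"
  show ?thesis
  proof (cases "measure M A = 0")
    case True
    then show ?thesis
      by (simp add: A_def emeasure_eq_measure eln_def)
  next
    case False
    then have A: "A \<in> sets M" "measure M A > 0"
      using measure_notin_sets[of A M] measure_nonneg[of M A] by (blast, linarith)
    then have "A \<noteq> {}"
      by auto
    then have cvx: "convex_set RS \<and> compact RS \<and> (\<forall>k\<in>{1..K}. convex_set (RO k) \<and> compact (RO k))"
      using assms(11) by (auto simp: A_def)
    have mS: "S \<in> measurable M (lebn d)"
      using assms(2) by (rule distributed_measurable)
    have m\<Omega>: "\<Omega> k \<in> measurable M (lebn (p k))" if "k \<in> {1..K}" for k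
      using assms(3)[OF that] by (rule distributed_measurable)
    have iS: "integrable M (\<lambda>\<omega>. indicator A \<omega> * S \<omega> j)" if "j < d" for j
      using cvx measurable_lebn_coordinate[OF mS that] A(1)
      by (intro integrable_indicator_coordinate_compact[where C = RS]) (auto simp: A_def)
    have iO: "integrable M (\<lambda>\<omega>. indicator A \<omega> * Ov k \<omega> j)" if "k \<in> {1..K}" "j < p k" for k j
      using cvx that borel_measurable_inversion_coordinate[OF assms(5) mS m\<Omega> assms(8)] A(1)
      by (intro integrable_indicator_coordinate_compact[where C = "RO k"]) (auto simp: A_def)
    define s where "s = cond_mean M A d S"
    define ov where "ov k = cond_mean M A (p k) (Ov k)" for k
    have so_region: "(s, ov) \<in> ?R"
      using cond_mean_in_convex[OF _ A assms(9)] cond_mean_in_convex[OF _ A assms(10)]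
        cvx iS iO by (auto simp: s_def ov_def A_def)
    have i\<Omega>: "integrable M (\<lambda>\<omega>. indicator A \<omega> * \<Omega> k \<omega> j)"
      and mean_\<Omega>: "cond_mean M A (p k) (\<Omega> k) j
             = vadd (vadd (mv (p k) d (D k) s) (mv (p k) (p k) (P k) (ov k))) (q k) j"
      if "k \<in> {1..K}" "j < p k" for k j
      using cond_mean_inversion_map[OF _ A(1) _ assms(8) iS iO] that A(2)
      by (simp_all add: s_def ov_def)
    have "?F (s, ov) = convex_conj d (log_mgf d f) (cond_mean M A d S)
        + (\<Sum>k=1..K. convex_conj (p k) (log_mgf (p k) (g k)) (cond_mean M A (p k) (\<Omega> k)))"
      by (intro arg_cong2[where f = "(+)"] refl sum.cong convex_conj_cong)
        (use mean_\<Omega> in \<open>auto simp: s_def\<close>)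
    also have "\<dots> \<le> ereal (- ln (measure M A))"
      by (rule convex_conj_cond_means_le[OF assms(1-4) A iS i\<Omega>])
    finally have "eln (emeasure M A) \<le> - (INF so \<in> ?R. ?F so)"
      unfolding emeasure_eq_measure by (rule eln_le_neg_INF[OF A(2) so_region])
    then show ?thesis
      by (simp only: A_def)
  qed
qed

end
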